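(* Let $U\subset\mathbb{R}^2$ be the bounded complementary domain (interior) of a standardly embedded Warsaw circle, and let $\psi:U\to\operatorname{int}(D^2)$ be conformal. Then there exists a homeomorphism $H:\overline{U}\times\mathbb{R}\to\overline{U}\times\mathbb{R}$ with $H(U\times\mathbb{R})=U\times\mathbb{R}$ such that $\Psi H\Psi^{-1}:\operatorname{int}(D^2)\times\mathbb{R}\to\operatorname{int}(D^2)\times\mathbb{R}$ does not extend to a homeomorphism of $D^2\times\mathbb{R}$.
   Context: $D^2$ is the closed unit disk; $\Psi:U\times\mathbb{R}\to\operatorname{int}(D^2)\times\mathbb{R}$ is defined by $\Psi(u,t)=(\psi(u),t)$. *)

theory Defs
  imports "HOL-Complex_Analysis.Complex_Analysis"
begin

text \<open>The standard Warsaw circle in the plane (identified with the complex numbers):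
  the closure of the topologist's sine curve, i.e. the graph of sin(1/x) over (0,1]
  together with the limit bar {0} x [-1,1], closed up by the polygonal arc
  (0,-1) -> (0,-2) -> (1,-2) -> (1, sin 1).\<close>

definition standard_warsaw_circle :: "complex set" where
  "standard_warsaw_circle =
     {Complex x (sin (1 / x)) | x. 0 < x \<and> x \<le> 1}
   \<union> {Complex 0 y | y. -2 \<le> y \<and> y \<le> 1}
   \<union> {Complex x (-2) | x. 0 \<le> x \<and> x \<le> 1}
   \<union> {Complex 1 y | y. -2 \<le> y \<and> y \<le> sin 1}"

definition standard_warsaw :: "complex set \<Rightarrow> bool" where
  "standard_warsaw W \<longleftrightarrow>
     (\<exists>h k. homeomorphism UNIV UNIV h k \<and> W = h ` standard_warsaw_circle)"

definition Psi_map :: "(complex \<Rightarrow> complex) \<Rightarrow> complex \<times> real \<Rightarrow> complex \<times> real" where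
  "Psi_map psi = (\<lambda>(u, t). (psi u, t))"

definition Psi_inv :: "complex set \<Rightarrow> (complex \<Rightarrow> complex) \<Rightarrow> complex \<times> real \<Rightarrow> complex \<times> real" where
  "Psi_inv U psi = (\<lambda>(z, t). (inv_into U psi z, t))"

end

theory Submission
  imports Defs
begin

(* Up to a homeomorphism k of the plane, U is the region {0 < x < 1, -2 < y < sin (1/x)} below the
   topologist's sine curve. Let H lift each point z by the height Im (k z) of its image in this
   standard picture. Through Psi, H becomes (w, t) |-> (w, t + Im (k (psi^-1 w))), so an extension
   to the closed cylinder would extend this height continuously to the closed disc. But the points
   of the disc corresponding to the peaks 1 / (pi/2 + 2 n pi) of the sine curve, where the height is 0,
   accumulate somewhere in the closed disc, and a small convex neighbourhood of the limit contains two
   of them; its image in the standard picture is connected, so it also reaches the trough between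
   these peaks, where the height is below -1. *)

lemma unbounded_ray:
  fixes p d :: "'a::real_normed_vector"
  assumes "d \<noteq> 0"
  shows "\<not> bounded ((\<lambda>s. p + s *\<^sub>R d) ` {0..})"
proof
  assume "bounded ((\<lambda>s. p + s *\<^sub>R d) ` {0..})"
  then obtain B where B: "\<And>s. s \<ge> 0 \<Longrightarrow> norm (p + s *\<^sub>R d) \<le> B"
    by (auto simp: bounded_iff)
  define s where "s = (B + norm p + 1) / norm d"
  have "norm p \<le> B"
    using B[of 0] by simp
  then have "B + norm p + 1 > 0"
    using norm_ge_zero[of p] by linarith
  then have "s \<ge> 0"
    by (simp add: s_def)
  have "s * norm d - norm p \<le> norm (p + s *\<^sub>R d)"
    using norm_diff_ineq[of "s *\<^sub>R d" p] \<open>s \<ge> 0\<close> by (simp add: add.commute)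
  also have "\<dots> \<le> B"
    using B[OF \<open>s \<ge> 0\<close>] .
  finally show False
    using assms by (simp add: s_def)
qed

lemma bounded_component_unique:
  assumes C: "C \<in> components S" "bounded C"
    and V: "connected V" "V \<subseteq> S"
    and escape: "\<And>p. p \<in> S - V \<Longrightarrow> \<exists>R. connected R \<and> \<not> bounded R \<and> p \<in> R \<and> R \<subseteq> S"
  shows "C = V"
proof -
  have "C \<subseteq> V"
  proof
    fix p assume "p \<in> C"
    show "p \<in> V"
    proof (rule ccontr)
      assume "p \<notin> V"
      then obtain R where R: "connected R" "\<not> bounded R" "p \<in> R" "R \<subseteq> S"
        using escape \<open>p \<in> C\<close> in_components_subset[OF C(1)] by blast
      then have "R \<subseteq> C"
        using components_maximal[OF C(1)] \<open>p \<in> C\<close> by blast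
      then show False
        using R(2) C(2) bounded_subset by blast
    qed
  qed
  moreover have "C \<noteq> {}"
    using C(1) in_components_nonempty by blast
  ultimately show ?thesis
    using components_maximal[OF C(1) V] by blast
qed

lemma homeomorphism_image_components:
  assumes "homeomorphism UNIV UNIV h k" "C \<in> components S"
  shows "h ` C \<in> components (h ` S)"
proof -
  have conth: "continuous_on A h" for A
    using assms(1) continuous_on_subset unfolding homeomorphism_def by blast
  have contk: "continuous_on B k" for B
    using assms(1) continuous_on_subset unfolding homeomorphism_def by blast
  have kh: "k (h x) = x" and hk: "h (k y) = y" for x y
    using assms(1) unfolding homeomorphism_def by auto
  have maximal: "D = C" if "D \<noteq> {}" "C \<subseteq> D" "D \<subseteq> S" "connected D" for D
    using assms(2) that unfolding in_components_maximal by blast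
  show ?thesis
    unfolding in_components_maximal
  proof (intro conjI allI impI)
    fix D assume D: "D \<noteq> {} \<and> h ` C \<subseteq> D \<and> D \<subseteq> h ` S \<and> connected D"
    have "C \<subseteq> k ` D"
      using D by (force simp: kh)
    moreover have "k ` D \<subseteq> S"
      using D by (auto simp: kh)
    ultimately have "k ` D = C"
      using D connected_continuous_image[OF contk] by (intro maximal) auto
    then show "D = h ` C"
      by (auto simp: image_comp hk)
  qed (use assms(2) connected_continuous_image[OF conth] in \<open>auto simp: in_components_maximal\<close>)
qed

lemma continuous_on_inv_into_open_inj:
  fixes f :: "'a::euclidean_space \<Rightarrow> 'a"
  assumes "open S" "continuous_on S f" "inj_on f S"
  shows "continuous_on (f ` S) (inv_into S f)"
proof -
  obtain g where g: "homeomorphism S (f ` S) f g"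
    using invariance_of_domain_homeomorphism[OF assms(1,2) order_refl assms(3)] .
  have "g w = inv_into S f w" if "w \<in> f ` S" for w
    using that assms(3) g by (auto simp: homeomorphism_def)
  moreover have "continuous_on (f ` S) g"
    using g by (simp add: homeomorphism_def)
  ultimately show ?thesis
    using continuous_on_cong by blast
qed

lemma homeomorphism_shear:
  fixes \<phi> :: "'a::topological_space \<Rightarrow> 'b::real_normed_vector"
  assumes "continuous_on A \<phi>"
  shows "homeomorphism (A \<times> UNIV) (A \<times> UNIV) (\<lambda>(z, t). (z, t + \<phi> z)) (\<lambda>(z, t). (z, t - \<phi> z))"
proof (rule homeomorphismI)
  show "continuous_on (A \<times> UNIV) (\<lambda>(z, t). (z, t + \<phi> z))"
    unfolding case_prod_unfold
    by (intro continuous_intros continuous_on_compose2[OF assms]) auto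
  show "continuous_on (A \<times> UNIV) (\<lambda>(z, t). (z, t - \<phi> z))"
    unfolding case_prod_unfold
    by (intro continuous_intros continuous_on_compose2[OF assms]) auto
qed auto

lemma shear_image_Times: "(\<lambda>(z, t). (z, t + \<phi> z)) ` (B \<times> UNIV) = B \<times> UNIV"
  for \<phi> :: "'a \<Rightarrow> 'b::ab_group_add"
proof (intro subset_antisym subsetI)
  fix p :: "'a \<times> 'b" assume "p \<in> B \<times> UNIV"
  then show "p \<in> (\<lambda>(z, t). (z, t + \<phi> z)) ` (B \<times> UNIV)"
    by (intro image_eqI[where x = "(fst p, snd p - \<phi> (fst p))"]) auto
qed auto

lemma continuous_extension_from_shear:
  fixes \<phi> :: "'a::topological_space \<Rightarrow> 'b::real_normed_vector"
  assumes "continuous_on (B \<times> UNIV) G" "A \<subseteq> B"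
    and "\<And>z t. z \<in> A \<Longrightarrow> G (z, t) = (z, t + \<phi> z)"
  shows "\<exists>g. continuous_on B g \<and> (\<forall>z\<in>A. g z = \<phi> z)"
proof (intro exI conjI)
  show "continuous_on B (\<lambda>z. snd (G (z, 0)))"
    by (intro continuous_intros continuous_on_compose2[OF assms(1)]) auto
qed (use assms in auto)

definition warsaw_inner :: "complex set" where
  "warsaw_inner = {z. 0 < Re z \<and> Re z < 1 \<and> -2 < Im z \<and> Im z < sin (1 / Re z)}"

lemma mem_standard_warsaw_circle:
  "z \<in> standard_warsaw_circle \<longleftrightarrow>
     (0 < Re z \<and> Re z \<le> 1 \<and> Im z = sin (1 / Re z)) \<or> (Re z = 0 \<and> -2 \<le> Im z \<and> Im z \<le> 1)
   \<or> (Im z = -2 \<and> 0 \<le> Re z \<and> Re z \<le> 1) \<or> (Re z = 1 \<and> -2 \<le> Im z \<and> Im z \<le> sin 1)"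
  unfolding standard_warsaw_circle_def by (auto simp: complex_eq_iff)

lemma warsaw_inner_Int_standard_warsaw_circle: "warsaw_inner \<inter> standard_warsaw_circle = {}"
  by (auto simp: warsaw_inner_def mem_standard_warsaw_circle)

lemma open_warsaw_inner: "open warsaw_inner"
proof -
  have eq: "warsaw_inner = {z. Re z < 1} \<inter> {z. -2 < Im z}
      \<inter> ({z. 0 < Re z} \<inter> (\<lambda>z. sin (1 / Re z) - Im z) -` {0<..})"
    by (auto simp: warsaw_inner_def)
  have "open ({z. 0 < Re z} \<inter> (\<lambda>z. sin (1 / Re z) - Im z) -` {0<..})"
    by (intro continuous_open_preimage continuous_intros open_halfspace_Re_gt) auto
  then show ?thesis
    unfolding eq by (rule open_Int[OF open_Int[OF open_halfspace_Re_lt open_halfspace_Im_gt]])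
qed

lemma warsaw_inner_eq_image:
  "warsaw_inner = (\<lambda>p. Complex (fst p) (snd p * (sin (1 / fst p) + 2) - 2)) ` ({0<..<1} \<times> {0<..<1})"
proof -
  have pos: "sin (1 / x) + 2 > 0" for x :: real
    using sin_ge_minus_one[of "1 / x"] by linarith
  show ?thesis
  proof (intro set_eqI iffI)
    fix z assume z: "z \<in> warsaw_inner"
    define s where "s = (Im z + 2) / (sin (1 / Re z) + 2)"
    have "s \<in> {0<..<1}" and "Im z = s * (sin (1 / Re z) + 2) - 2"
      using z pos[of "Re z"] by (auto simp: s_def warsaw_inner_def field_simps)
    then show "z \<in> (\<lambda>p. Complex (fst p) (snd p * (sin (1 / fst p) + 2) - 2)) ` ({0<..<1} \<times> {0<..<1})"
      using z by (intro image_eqI[where x = "(Re z, s)"]) (auto simp: warsaw_inner_def complex_eq_iff)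
  next
    fix z assume "z \<in> (\<lambda>p. Complex (fst p) (snd p * (sin (1 / fst p) + 2) - 2)) ` ({0<..<1} \<times> {0<..<1})"
    then obtain x s where "x \<in> {0<..<1}" "s \<in> {0<..<1}" and z: "z = Complex x (s * (sin (1 / x) + 2) - 2)"
      by auto
    moreover have "0 < s * (sin (1 / x) + 2)" and "s * (sin (1 / x) + 2) < sin (1 / x) + 2"
      using pos[of x] \<open>s \<in> {0<..<1}\<close> by simp_all
    ultimately show "z \<in> warsaw_inner"
      by (simp add: warsaw_inner_def)
  qed
qed

lemma connected_warsaw_inner: "connected warsaw_inner"
proof -
  have "continuous_on ({0<..<1} \<times> {0<..<1}) (\<lambda>p. Complex (fst p) (snd p * (sin (1 / fst p) + 2) - 2))"
    unfolding Complex_eq by (intro continuous_intros) auto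
  then show ?thesis
    unfolding warsaw_inner_eq_image
    by (intro connected_continuous_image convex_connected convex_Times) auto
qed

lemma standard_warsaw_circle_bounds:
  assumes "z \<in> standard_warsaw_circle"
  shows "0 \<le> Re z" "Re z \<le> 1" "-2 \<le> Im z" "Im z \<le> 1"
  using assms sin_ge_minus_one[of "1 / Re z"] sin_le_one[of "1 / Re z"] sin_le_one[of 1]
  unfolding mem_standard_warsaw_circle by linarith+

lemma standard_warsaw_circle_escape_ray:
  assumes "p \<notin> standard_warsaw_circle" "p \<notin> warsaw_inner"
  obtains d where "d \<noteq> 0" "\<And>s. s \<ge> 0 \<Longrightarrow> p + s *\<^sub>R d \<notin> standard_warsaw_circle"
proof -
  consider "Re p < 0" | "Re p > 1" | "Im p < -2" | "0 \<le> Re p" "Re p \<le> 1" "Im p \<ge> -2"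
    by linarith
  then show ?thesis
  proof cases
    case 1
    show ?thesis
      by (rule that[of "-1"]) (use 1 in \<open>auto dest: standard_warsaw_circle_bounds\<close>)
  next
    case 2
    show ?thesis
      by (rule that[of 1]) (use 2 in \<open>auto dest: standard_warsaw_circle_bounds\<close>)
  next
    case 3
    show ?thesis
      by (rule that[of "-\<i>"]) (use 3 in \<open>auto dest: standard_warsaw_circle_bounds\<close>)
  next
    case 4
    have above: "(Re p = 0 \<and> Im p > 1) \<or> (Re p > 0 \<and> Im p > sin (1 / Re p))"
      using assms 4 sin_ge_minus_one[of "1 / Re p"]
      unfolding mem_standard_warsaw_circle warsaw_inner_def by fastforce
    then have "Im p > -1"
      using sin_ge_minus_one[of "1 / Re p"] by linarith
    show ?thesis
    proof (rule that[of \<i>])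
      fix s :: real assume "s \<ge> 0"
      then show "p + s *\<^sub>R \<i> \<notin> standard_warsaw_circle"
        using above \<open>Im p > -1\<close> unfolding mem_standard_warsaw_circle by auto
    qed simp
  qed
qed

lemma bounded_component_standard_warsaw_circle:
  assumes "C \<in> components (- standard_warsaw_circle)" "bounded C"
  shows "C = warsaw_inner"
proof (rule bounded_component_unique[OF assms connected_warsaw_inner])
  show "warsaw_inner \<subseteq> - standard_warsaw_circle"
    using warsaw_inner_Int_standard_warsaw_circle by blast
  fix p assume "p \<in> - standard_warsaw_circle - warsaw_inner"
  then obtain d where "d \<noteq> 0" and ray: "\<And>s. s \<ge> 0 \<Longrightarrow> p + s *\<^sub>R d \<notin> standard_warsaw_circle"
    using standard_warsaw_circle_escape_ray by blast
  show "\<exists>R. connected R \<and> \<not> bounded R \<and> p \<in> R \<and> R \<subseteq> - standard_warsaw_circle"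
  proof (intro exI conjI)
    show "connected ((\<lambda>s. p + s *\<^sub>R d) ` {0..})"
      by (intro connected_continuous_image continuous_intros convex_connected) auto
    show "p \<in> (\<lambda>s. p + s *\<^sub>R d) ` {0..}"
      by (rule image_eqI[where x = 0]) auto
  qed (use unbounded_ray[OF \<open>d \<noteq> 0\<close>] ray in auto)
qed

lemma bounded_component_standard_warsaw:
  assumes "standard_warsaw W" "U \<in> components (- W)" "bounded U"
  obtains k where "continuous_on UNIV k" "k ` U = warsaw_inner" "open U"
proof -
  obtain h k where hk: "homeomorphism UNIV UNIV h k" and W: "W = h ` standard_warsaw_circle"
    using assms(1) unfolding standard_warsaw_def by blast
  have hom_k: "homeomorphism UNIV UNIV k h"
    using hk by (simp add: homeomorphism_symD)
  have cont_k: "continuous_on A k" for A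
    using hk continuous_on_subset unfolding homeomorphism_def by blast
  have "inj k"
    using hk unfolding homeomorphism_def by (metis inj_on_inverseI)
  then have "bij k"
    using hk by (simp add: bij_def homeomorphism_def)
  moreover have "k ` W = standard_warsaw_circle"
    using hk unfolding W image_comp homeomorphism_def by simp
  ultimately have "k ` U \<in> components (- standard_warsaw_circle)"
    using homeomorphism_image_components[OF hom_k assms(2)] by (simp add: bij_image_Compl_eq)
  moreover have "bounded (k ` U)"
    using compact_continuous_image[OF cont_k, of "closure U"] assms(3)
    by (meson bounded_subset closure_subset compact_closure compact_imp_bounded image_mono)
  ultimately have kU: "k ` U = warsaw_inner"
    by (rule bounded_component_standard_warsaw_circle)
  then have "h ` warsaw_inner = U"
    using hk unfolding kU[symmetric] image_comp homeomorphism_def by simp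
  then have "open U"
    using homeomorphism_imp_open_map[OF hk] open_warsaw_inner by (metis open_openin subtopology_UNIV)
  with kU cont_k show ?thesis
    using that by blast
qed

definition sine_peak :: "nat \<Rightarrow> real" where
  "sine_peak n = 1 / (pi / 2 + 2 * real n * pi)"

definition sine_trough :: "nat \<Rightarrow> real" where
  "sine_trough n = 1 / (pi / 2 + 2 * real n * pi + pi)"

lemma sine_angle_pos: "0 < pi / 2 + 2 * real n * pi"
  by (simp add: add_pos_nonneg)

lemma sine_peak_pos: "0 < sine_peak n"
  unfolding sine_peak_def using sine_angle_pos by simp

lemma sine_peak_less_one: "sine_peak n < 1"
proof -
  have "0 \<le> 2 * real n * pi"
    by simp
  then have "1 < pi / 2 + 2 * real n * pi"
    using pi_gt3 by linarith
  then show ?thesis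
    unfolding sine_peak_def by simp
qed

lemma sin_inverse_sine_peak: "sin (1 / sine_peak n) = 1"
  by (simp add: sine_peak_def sin_add)

lemma sin_inverse_sine_trough: "sin (1 / sine_trough n) = -1"
proof -
  have "1 / sine_trough n = 1 / sine_peak n + pi"
    by (simp add: sine_trough_def sine_peak_def)
  then show ?thesis
    by (simp only: sin_periodic_pi sin_inverse_sine_peak)
qed

lemma sine_trough_le_peak: "sine_trough n \<le> sine_peak n"
  unfolding sine_trough_def sine_peak_def
  by (intro frac_le) (use sine_angle_pos[of n] pi_gt_zero in linarith)+

lemma sine_peak_le_trough:
  assumes "n < m"
  shows "sine_peak m \<le> sine_trough n"
proof -
  have "(real n + 1) * (2 * pi) \<le> real m * (2 * pi)"
    using assms by (intro mult_right_mono) auto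
  then have "2 * real n * pi + 2 * pi \<le> 2 * real m * pi"
    by (simp add: algebra_simps)
  then have "pi / 2 + 2 * real n * pi + pi \<le> pi / 2 + 2 * real m * pi"
    using pi_ge_zero by linarith
  then show ?thesis
    unfolding sine_trough_def sine_peak_def
    by (intro frac_le) (use sine_angle_pos[of n] pi_gt_zero in linarith)+
qed

lemma sine_peak_in_warsaw_inner: "complex_of_real (sine_peak n) \<in> warsaw_inner"
  using sine_peak_pos sine_peak_less_one sin_inverse_sine_peak by (simp add: warsaw_inner_def)

lemma connected_warsaw_inner_subset_dips:
  assumes "connected C" "C \<subseteq> warsaw_inner" "m < n"
    and "complex_of_real (sine_peak m) \<in> C" "complex_of_real (sine_peak n) \<in> C"
  obtains w where "w \<in> C" "Im w < -1"
proof -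
  obtain w where "w \<in> C" and "w \<bullet> 1 = sine_trough m"
    using connected_ivt_component[OF assms(1,5,4), of 1 "sine_trough m"]
      sine_peak_le_trough[OF assms(3)] sine_trough_le_peak[of m] by auto
  then have "Re w = sine_trough m" and "Im w < sin (1 / Re w)"
    using assms(2) by (auto simp: warsaw_inner_def)
  then show ?thesis
    using that \<open>w \<in> C\<close> sin_inverse_sine_trough[of m] by simp
qed

lemma convex_subset_small_oscillation_two_terms:
  fixes S :: "'a::euclidean_space set" and g :: "'a \<Rightarrow> 'b::metric_space" and zs :: "nat \<Rightarrow> 'a"
  assumes "convex S" "bounded S" "continuous_on (closure S) g" "\<And>n. zs n \<in> S" "e > 0"
  obtains D m n where "convex D" "D \<subseteq> S" "m < n" "zs m \<in> D" "zs n \<in> D"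
    "\<And>z w. z \<in> D \<Longrightarrow> w \<in> D \<Longrightarrow> dist (g z) (g w) < e"
proof -
  have "compact (closure S)"
    using assms(2) by (simp add: compact_closure)
  moreover have "\<And>n. zs n \<in> closure S"
    using assms(4) closure_subset by blast
  ultimately obtain l r where l: "l \<in> closure S" and r: "strict_mono r" and lim: "(zs \<circ> r) \<longlonglongrightarrow> l"
    using compact_imp_seq_compact seq_compactE by metis
  obtain d where "d > 0"
    and d: "\<And>z. z \<in> closure S \<Longrightarrow> dist z l < d \<Longrightarrow> dist (g z) (g l) < e / 2"
    using assms(3,5) l unfolding continuous_on_iff by (metis half_gt_zero)
  obtain N where N: "\<And>n. n \<ge> N \<Longrightarrow> dist (zs (r n)) l < d"
    using lim \<open>d > 0\<close> unfolding lim_sequentially by auto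
  define D where "D = ball l d \<inter> S"
  have "dist (g z) (g w) < e" if "z \<in> D" "w \<in> D" for z w
  proof -
    have "z \<in> closure S" "w \<in> closure S" "dist z l < d" "dist w l < d"
      using that closure_subset by (auto simp: D_def dist_commute)
    then have "dist (g z) (g l) < e / 2" "dist (g w) (g l) < e / 2"
      using d by blast+
    then show ?thesis
      using dist_triangle_half_l by blast
  qed
  moreover have "zs (r n) \<in> D" if "n \<ge> N" for n
    using N[OF that] assms(4) by (simp add: D_def dist_commute)
  moreover have "r N < r (Suc N)"
    using r by (simp add: strict_mono_def)
  ultimately show ?thesis
    using that[of D "r N" "r (Suc N)"] assms(1) by (simp add: D_def convex_Int)
qed

lemma no_continuous_extension_Im_warsaw_inner:
  fixes S :: "'a::euclidean_space set" and f :: "'a \<Rightarrow> complex"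
  assumes S: "convex S" "bounded S"
    and f: "continuous_on S f" "f ` S \<subseteq> warsaw_inner"
    and peaks: "\<And>n. complex_of_real (sine_peak n) \<in> f ` S"
  shows "\<not> (\<exists>g. continuous_on (closure S) g \<and> (\<forall>z\<in>S. g z = Im (f z)))"
proof
  assume "\<exists>g. continuous_on (closure S) g \<and> (\<forall>z\<in>S. g z = Im (f z))"
  then obtain g where g: "continuous_on (closure S) g" and gf: "\<And>z. z \<in> S \<Longrightarrow> g z = Im (f z)"
    by blast
  have "\<forall>n. \<exists>z\<in>S. f z = complex_of_real (sine_peak n)"
    using peaks by (metis imageE)
  then obtain zs where zs: "\<And>n. zs n \<in> S" "\<And>n. f (zs n) = complex_of_real (sine_peak n)"
    by metis
  obtain D m n where D: "convex D" "D \<subseteq> S" "m < n" "zs m \<in> D" "zs n \<in> D"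
    and osc: "\<And>z w. z \<in> D \<Longrightarrow> w \<in> D \<Longrightarrow> dist (g z) (g w) < 1"
    using convex_subset_small_oscillation_two_terms[of S g zs 1, OF S g zs(1) zero_less_one] by blast
  have "connected (f ` D)"
    using D(1,2) by (intro connected_continuous_image continuous_on_subset[OF f(1)] convex_connected)
  moreover have "f ` D \<subseteq> warsaw_inner"
    using D(2) f(2) by blast
  ultimately obtain w where "w \<in> f ` D" "Im w < -1"
    using connected_warsaw_inner_subset_dips D(3-5) zs(2) by (metis image_eqI)
  then obtain z where "z \<in> D" "g z < -1"
    using D(2) gf by auto
  moreover have "g (zs m) = 0"
    using gf zs by simp
  ultimately show False
    using osc[of z "zs m"] D(4) by (simp add: dist_real_def)
qed

lemma no_continuous_extension_Im_inv_into:
  fixes U :: "complex set" and psi k :: "complex \<Rightarrow> complex"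
  assumes "open U" "continuous_on U psi" "bij_betw psi U (ball 0 1)"
    and "continuous_on UNIV k" "k ` U = warsaw_inner"
  shows "\<not> (\<exists>g. continuous_on (cball 0 1) g \<and> (\<forall>z\<in>ball 0 1. g z = Im (k (inv_into U psi z))))"
proof -
  have inj: "inj_on psi U" and ball: "psi ` U = ball 0 1"
    using assms(3) by (auto simp: bij_betw_def)
  have "continuous_on (ball 0 1) (\<lambda>z. k (inv_into U psi z))"
    using continuous_on_inv_into_open_inj[OF assms(1,2) inj] ball
    by (auto intro: continuous_on_compose2[OF assms(4)])
  moreover have "(\<lambda>z. k (inv_into U psi z)) ` ball 0 1 \<subseteq> warsaw_inner"
    using assms(5) ball by (auto simp: inv_into_into)
  moreover have "complex_of_real (sine_peak n) \<in> (\<lambda>z. k (inv_into U psi z)) ` ball 0 1" for n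
  proof -
    obtain u where "u \<in> U" "complex_of_real (sine_peak n) = k u"
      using sine_peak_in_warsaw_inner[of n] assms(5) by blast
    then show ?thesis
      using ball inj by (intro image_eqI[where x = "psi u"]) auto
  qed
  ultimately show ?thesis
    using no_continuous_extension_Im_warsaw_inner[of "ball 0 1" "\<lambda>z. k (inv_into U psi z)"] by simp
qed

theorem mainTheorem2:
  fixes W U :: "complex set" and psi :: "complex \<Rightarrow> complex"
  assumes "standard_warsaw W"
    and "U \<in> components (- W)" and "bounded U"
    and "psi holomorphic_on U" and "bij_betw psi U (ball 0 1)"
  shows "\<exists>H H'. homeomorphism (closure U \<times> (UNIV :: real set)) (closure U \<times> UNIV) H H'
            \<and> H ` (U \<times> UNIV) = U \<times> UNIV
            \<and> \<not> (\<exists>G G'. homeomorphism (cball 0 1 \<times> (UNIV :: real set)) (cball 0 1 \<times> UNIV) G G'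
                   \<and> (\<forall>p \<in> ball 0 1 \<times> UNIV. G p = Psi_map psi (H (Psi_inv U psi p))))"
proof -
  obtain k where k: "continuous_on UNIV k" "k ` U = warsaw_inner" and "open U"
    using bounded_component_standard_warsaw[OF assms(1-3)] by blast
  have no_ext: "\<not> (\<exists>g. continuous_on (cball 0 1) g \<and> (\<forall>z\<in>ball 0 1. g z = Im (k (inv_into U psi z))))"
    using no_continuous_extension_Im_inv_into[OF \<open>open U\<close> holomorphic_on_imp_continuous_on[OF assms(4)] assms(5) k] .
  define H where "H = (\<lambda>(z, t). (z, t + Im (k z)))"
  have "homeomorphism (closure U \<times> UNIV) (closure U \<times> UNIV) H (\<lambda>(z, t). (z, t - Im (k z)))"
    unfolding H_def by (intro homeomorphism_shear continuous_intros continuous_on_subset[OF k(1)]) auto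
  moreover have "H ` (U \<times> UNIV) = U \<times> UNIV"
    unfolding H_def by (rule shear_image_Times)
  moreover have False
    if G: "homeomorphism (cball 0 1 \<times> (UNIV :: real set)) (cball 0 1 \<times> UNIV) G G'"
      "\<forall>p \<in> ball 0 1 \<times> UNIV. G p = Psi_map psi (H (Psi_inv U psi p))" for G G'
  proof -
    have cont: "continuous_on (cball 0 1 \<times> UNIV) G"
      using G(1) by (simp add: homeomorphism_def)
    have shear: "G (z, t) = (z, t + Im (k (inv_into U psi z)))" if "z \<in> ball 0 1" for z t
      using G(2) that f_inv_into_f[of z psi U] bij_betw_imp_surj_on[OF assms(5)]
      by (simp add: Psi_map_def Psi_inv_def H_def)
    show False
      using continuous_extension_from_shear[OF cont ball_subset_cball shear] no_ext by blast
  qed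
  ultimately show ?thesis
    by blast
qed

end
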